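(* Let $m=2^\alpha\beta$ be a positive integer with $\beta$ odd. Then, as operators on meromorphic functions on the upper half-plane invariant under $\Gamma_0(2)^+$, $$\tilde{\mathbf{T}}_m=\sum_{\substack{r^2\mid m\\ r\ \text{odd}}}\ \sum_{i=0}^{\alpha}\mathbf{T}_{m/(r^22^i)},$$ where the outer sum is over positive odd integers $r$ with $r^2\mid m$.
   Context: Matrices act on the upper half-plane by Möbius transformations. $\Gamma_0(2)$ is the group of integer matrices $\begin{bmatrix}a&b\\c&d\end{bmatrix}$ of determinant $1$ with $c$ even, $w_2=2^{-1/2}\begin{bmatrix}0&-1\\2&0\end{bmatrix}$, and $\Gamma_0(2)^+$ is generated by $\Gamma_0(2)$ and $w_2$. For a positive integer $n$ define $M^n=M_1^n\cup S_1^n\cup S_2^n$ with $M_1^n=\{\begin{bmatrix}x&y\\0&z\end{bmatrix}: x,y,z\in\mathbb{Z},\ xz=n,\ 0\leq y<z,\ \gcd(x,y,z)=1,\ x\text{ odd}\}$, $S_1^n=\{\begin{bmatrix}x&y\\0&z\end{bmatrix}: xz=n,\ 0\leq y<z,\ \gcd(x,y,z)=1,\ z\text{ odd}\}$, $S_2^n=\{2^{-1/2}\begin{bmatrix}x&y\\0&z\end{bmatrix}: xz=2n,\ 0\leq y<z,\ \gcd(x,y,z)=1,\ x,z\text{ even}\}$ (all with $x,z>0$). Operators: $\mathbf{T}_nf(\tau)=\sum_{\gamma\in M^n}f(\gamma\tau)$, and $\tilde{\mathbf{T}}_nf(\tau)=\sum_{xz=n,\,0\leq y<z}f\big(\frac{x\tau+y}{z}\big)$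 if $n$ is odd, while for $n$ even $\tilde{\mathbf{T}}_nf(\tau)=\sum_{xz=n,\,0\leq y<z}f\big(\frac{x\tau+y}{z}\big)+\sum_{xz=2n,\ x,z\text{ even},\ 0\leq y<z}f\big(\frac{x\tau+y}{z}\big)$, sums over integers $x,z>0$, $y$. *)

theory Defs
  imports "HOL-Complex_Analysis.Complex_Analysis"
begin

definition upper_half_plane :: "complex set" where
  "upper_half_plane = {\<tau>. Im \<tau> > 0}"

text \<open>Invariance under Gamma0(2)+ : invariance under Gamma0(2) and under the
  Fricke involution w2, which acts by tau maps to -1/(2 tau).\<close>
definition gamma0_2_plus_invariant :: "(complex \<Rightarrow> complex) \<Rightarrow> bool" where
  "gamma0_2_plus_invariant f \<longleftrightarrow>
     (\<forall>a b c d :: int. \<forall>\<tau>\<in>upper_half_plane. a * d - b * c = 1 \<and> even c \<longrightarrow>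
        f ((of_int a * \<tau> + of_int b) / (of_int c * \<tau> + of_int d)) = f \<tau>) \<and>
     (\<forall>\<tau>\<in>upper_half_plane. f (- 1 / (2 * \<tau>)) = f \<tau>)"

text \<open>Elements of M^n: (x,y,z,False) is the integer matrix [x y; 0 z] (in M1 or S1),
  (x,y,z,True) is 2^(-1/2)[x y; 0 z] (in S2). Scalars do not affect the action.\<close>
definition M1 :: "nat \<Rightarrow> (int \<times> int \<times> int) set" where
  "M1 n = {(x,y,z). x > 0 \<and> z > 0 \<and> x * z = int n \<and> 0 \<le> y \<and> y < z \<and>
                    gcd (gcd x y) z = 1 \<and> odd x}"

definition S1 :: "nat \<Rightarrow> (int \<times> int \<times> int) set" where
  "S1 n = {(x,y,z). x > 0 \<and> z > 0 \<and> x * z = int n \<and> 0 \<le> y \<and> y < z \<and>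
                    gcd (gcd x y) z = 1 \<and> odd z}"

definition S2 :: "nat \<Rightarrow> (int \<times> int \<times> int) set" where
  "S2 n = {(x,y,z). x > 0 \<and> z > 0 \<and> x * z = 2 * int n \<and> 0 \<le> y \<and> y < z \<and>
                    gcd (gcd x y) z = 1 \<and> even x \<and> even z}"

definition Mset :: "nat \<Rightarrow> (int \<times> int \<times> int \<times> bool) set" where
  "Mset n = (\<lambda>(x,y,z). (x,y,z,False)) ` (M1 n \<union> S1 n) \<union> (\<lambda>(x,y,z). (x,y,z,True)) ` S2 n"

definition act :: "int \<Rightarrow> int \<Rightarrow> int \<Rightarrow> complex \<Rightarrow> complex" where
  "act x y z \<tau> = (of_int x * \<tau> + of_int y) / of_int z"

definition hecke_T :: "nat \<Rightarrow> (complex \<Rightarrow> complex) \<Rightarrow> complex \<Rightarrow> complex" where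
  "hecke_T n f \<tau> = (\<Sum>(x,y,z,s)\<in>Mset n. f (act x y z \<tau>))"

definition tildeA :: "nat \<Rightarrow> (int \<times> int \<times> int) set" where
  "tildeA n = {(x,y,z). x > 0 \<and> z > 0 \<and> x * z = int n \<and> 0 \<le> y \<and> y < z}"

definition tildeB :: "nat \<Rightarrow> (int \<times> int \<times> int) set" where
  "tildeB n = {(x,y,z). x > 0 \<and> z > 0 \<and> x * z = 2 * int n \<and> even x \<and> even z \<and> 0 \<le> y \<and> y < z}"

definition hecke_tildeT :: "nat \<Rightarrow> (complex \<Rightarrow> complex) \<Rightarrow> complex \<Rightarrow> complex" where
  "hecke_tildeT n f \<tau> =
     (\<Sum>(x,y,z)\<in>tildeA n. f (act x y z \<tau>)) +
     (if even n then (\<Sum>(x,y,z)\<in>tildeB n. f (act x y z \<tau>)) else 0)"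

end

theory Submission
  imports Defs
begin

text \<open>Both operators sum f over the points (x\<tau> + y)/z indexed by integer triples (x, y, z),
  and the point is unchanged when the triple is scaled by a positive integer. Scaling by an
  odd r maps the primitive triples counted by T at level n/r^2 onto the triples of level n with
  gcd r, so the sum of T over odd r with r^2 | n counts the triples of odd gcd. The triples of
  even gcd are twice the triples of level n/4; hence the tilde operator at level n is the
  odd-gcd part plus the tilde operator at level n/2 (for even n only), and iterating along the
  powers of 2 dividing m gives the formula.\<close>

definition triple_gcd :: "int \<times> int \<times> int \<Rightarrow> int" where
  "triple_gcd = (\<lambda>(x, y, z). gcd (gcd x y) z)"

definition diag_even :: "int \<times> int \<times> int \<Rightarrow> bool" where
  "diag_even = (\<lambda>(x, y, z). even x \<and> even z)"

definition triple_scale :: "int \<Rightarrow> int \<times> int \<times> int \<Rightarrow> int \<times> int \<times> int" where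
  "triple_scale g = (\<lambda>(x, y, z). (g * x, g * y, g * z))"

definition scale_invariant :: "(int \<times> int \<times> int \<Rightarrow> 'a) \<Rightarrow> bool" where
  "scale_invariant F \<longleftrightarrow> (\<forall>g t. g > 0 \<longrightarrow> F (triple_scale g t) = F t)"

definition odd_square_divisors :: "nat \<Rightarrow> nat set" where
  "odd_square_divisors n = {r. r > 0 \<and> odd r \<and> r ^ 2 dvd n}"

lemma finite_tildeA: "finite (tildeA n)"
proof (rule finite_subset)
  show "tildeA n \<subseteq> {1..int n} \<times> {0..int n} \<times> {1..int n}"
  proof
    fix t assume "t \<in> tildeA n"
    then obtain x y z where t: "t = (x, y, z)" "x > 0" "z > 0" "x * z = int n" "0 \<le> y" "y < z"
      unfolding tildeA_def by auto
    have "x \<le> x * z" "z \<le> x * z"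
      using t(2,3) by (simp_all add: mult_le_cancel_left1 mult_le_cancel_right1)
    then show "t \<in> {1..int n} \<times> {0..int n} \<times> {1..int n}" using t by auto
  qed
qed simp

lemma finite_odd_square_divisors: "n > 0 \<Longrightarrow> finite (odd_square_divisors n)"
proof (rule finite_subset)
  assume "n > 0"
  show "odd_square_divisors n \<subseteq> {..n}"
  proof
    fix r assume "r \<in> odd_square_divisors n"
    then have "r \<le> r ^ 2" "r ^ 2 \<le> n"
      using \<open>n > 0\<close> by (auto simp: odd_square_divisors_def power2_eq_square dvd_imp_le)
    then show "r \<in> {..n}" by simp
  qed
qed simp

lemma odd_square_divisors_mult_pow2: "odd_square_divisors (2 ^ a * n) = odd_square_divisors n"
  unfolding odd_square_divisors_def by (auto simp: coprime_dvd_mult_right_iff)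

lemma triple_gcd_scale: "g \<ge> 0 \<Longrightarrow> triple_gcd (triple_scale g t) = g * triple_gcd t"
  by (cases t) (simp add: triple_gcd_def triple_scale_def gcd_mult_left)

lemma diag_even_scale_odd: "odd g \<Longrightarrow> diag_even (triple_scale g t) = diag_even t"
  by (cases t) (simp add: diag_even_def triple_scale_def)

lemma inj_on_triple_scale: "g \<noteq> 0 \<Longrightarrow> inj_on (triple_scale g) A"
  by (auto simp: inj_on_def triple_scale_def)

lemma triple_scale_in_tildeA_iff:
  assumes "r > 0"
  shows "triple_scale (int r) t \<in> tildeA n \<longleftrightarrow> r ^ 2 dvd n \<and> t \<in> tildeA (n div r ^ 2)"
proof -
  obtain x y z where t: "t = (x, y, z)" by (cases t)
  have prod: "int r * x * (int r * z) = int (r ^ 2) * (x * z)"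
    by (simp add: power2_eq_square algebra_simps)
  have "int (r ^ 2) * (x * z) = int n \<longleftrightarrow> r ^ 2 dvd n \<and> x * z = int (n div r ^ 2)"
  proof
    assume n: "int (r ^ 2) * (x * z) = int n"
    then have "int (r ^ 2) dvd int n" by (metis dvd_triv_left)
    moreover have "int (n div r ^ 2) = x * z"
      using assms by (simp add: zdiv_int flip: n)
    ultimately show "r ^ 2 dvd n \<and> x * z = int (n div r ^ 2)"
      by (simp only: int_dvd_int_iff)
  next
    assume "r ^ 2 dvd n \<and> x * z = int (n div r ^ 2)"
    then show "int (r ^ 2) * (x * z) = int n" by (metis dvd_mult_div_cancel of_nat_mult)
  qed
  moreover have "0 < int r * x \<longleftrightarrow> 0 < x" "0 < int r * z \<longleftrightarrow> 0 < z"
    "0 \<le> int r * y \<longleftrightarrow> 0 \<le> y" "int r * y < int r * z \<longleftrightarrow> y < z"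
    using assms by (simp_all add: zero_less_mult_iff zero_le_mult_iff)
  moreover have "triple_scale (int r) t \<in> tildeA n \<longleftrightarrow> 0 < int r * x \<and> 0 < int r * z \<and>
      int r * x * (int r * z) = int n \<and> 0 \<le> int r * y \<and> int r * y < int r * z"
    by (simp add: t triple_scale_def tildeA_def)
  moreover have "t \<in> tildeA (n div r ^ 2) \<longleftrightarrow>
      0 < x \<and> 0 < z \<and> x * z = int (n div r ^ 2) \<and> 0 \<le> y \<and> y < z"
    by (simp add: t tildeA_def)
  ultimately show ?thesis unfolding prod by blast
qed

lemma triple_scale_of_dvd_gcd:
  assumes "g dvd triple_gcd t"
  obtains t' where "t = triple_scale g t'"
proof -
  obtain x y z where t: "t = (x, y, z)" by (cases t)
  have "g dvd gcd (gcd x y) z" using assms by (simp add: t triple_gcd_def)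
  then have "g dvd x" "g dvd y" "g dvd z" by (meson dvd_trans gcd_dvd1 gcd_dvd2)+
  then obtain x' y' z' where "x = g * x'" "y = g * y'" "z = g * z'" by (elim dvdE)
  then have "t = triple_scale g (x', y', z')" by (simp add: t triple_scale_def)
  then show thesis by (rule that)
qed

lemma triple_scale_primitive:
  assumes "triple_gcd t \<noteq> 0"
  obtains t' where "t = triple_scale (triple_gcd t) t'" and "triple_gcd t' = 1"
proof -
  obtain t' where t': "t = triple_scale (triple_gcd t) t'"
    using triple_scale_of_dvd_gcd[of "triple_gcd t" t, OF dvd_refl] by blast
  have "triple_gcd t \<ge> 0" by (cases t) (simp add: triple_gcd_def)
  then have "triple_gcd t * 1 = triple_gcd t * triple_gcd t'"
    by (metis t' mult.right_neutral triple_gcd_scale)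
  then have "triple_gcd t' = 1" using assms by (simp only: mult_cancel_left) simp
  with t' show thesis by (rule that)
qed

lemma sum_triple_scale_image:
  assumes "scale_invariant F" and "g > 0"
  shows "sum F (triple_scale g ` A) = sum F A"
proof -
  have "F (triple_scale g t) = F t" for t
    using assms unfolding scale_invariant_def by blast
  then show ?thesis
    using assms(2) by (simp add: sum.reindex inj_on_triple_scale)
qed

lemma sum_odd_gcd_triples:
  assumes F: "scale_invariant F" and n: "n > 0"
    and C: "\<And>g t. odd g \<Longrightarrow> C (triple_scale g t) = C t"
  shows "(\<Sum>r\<in>odd_square_divisors n.
            sum F {t \<in> tildeA (n div r ^ 2). triple_gcd t = 1 \<and> C t})
       = sum F {t \<in> tildeA n. odd (triple_gcd t) \<and> C t}"
proof -
  define P where "P r = {t \<in> tildeA (n div r ^ 2). triple_gcd t = 1 \<and> C t}" for r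
  have gcd_image: "triple_gcd t = int r" if "t \<in> triple_scale (int r) ` P r" for t r
    using that by (auto simp: triple_gcd_scale P_def)
  have decomp: "{t \<in> tildeA n. odd (triple_gcd t) \<and> C t}
      = (\<Union>r\<in>odd_square_divisors n. triple_scale (int r) ` P r)"
  proof (intro equalityI subsetI)
    fix t assume t: "t \<in> {t \<in> tildeA n. odd (triple_gcd t) \<and> C t}"
    then have "triple_gcd t \<noteq> 0" by auto
    then obtain t' where t': "t = triple_scale (triple_gcd t) t'" "triple_gcd t' = 1"
      by (rule triple_scale_primitive)
    define r where "r = nat (triple_gcd t)"
    have gcd_r: "triple_gcd t = int r"
      unfolding r_def by (cases t) (simp add: triple_gcd_def)
    have "odd r" using t gcd_r by simp
    then have r: "r > 0" "odd r" by (simp_all add: odd_pos)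
    have "triple_scale (int r) t' \<in> tildeA n" using t t' gcd_r by simp
    then have "r ^ 2 dvd n" "t' \<in> tildeA (n div r ^ 2)"
      using triple_scale_in_tildeA_iff[OF \<open>r > 0\<close>] by auto
    moreover have "C t'" using t t' gcd_r C[of "int r" t'] r by simp
    ultimately show "t \<in> (\<Union>r\<in>odd_square_divisors n. triple_scale (int r) ` P r)"
      using t' gcd_r r unfolding odd_square_divisors_def P_def by auto
  next
    fix t assume "t \<in> (\<Union>r\<in>odd_square_divisors n. triple_scale (int r) ` P r)"
    then obtain r t' where r: "r > 0" "odd r" "r ^ 2 dvd n" and t': "t' \<in> P r"
      and t: "t = triple_scale (int r) t'"
      unfolding odd_square_divisors_def by auto
    have "t \<in> tildeA n"
      using t t' r triple_scale_in_tildeA_iff[OF \<open>r > 0\<close>] by (simp add: P_def)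
    moreover have "triple_gcd t = int r" using t t' gcd_image by blast
    moreover have "C t" using t t' r C[of "int r" t'] by (simp add: P_def)
    ultimately show "t \<in> {t \<in> tildeA n. odd (triple_gcd t) \<and> C t}" using r by simp
  qed
  have finite_P: "finite (P r)" for r
    unfolding P_def using finite_tildeA by simp
  have disjoint: "triple_scale (int r) ` P r \<inter> triple_scale (int r') ` P r' = {}"
    if "r \<noteq> r'" for r r'
  proof (rule equals0I)
    fix t assume "t \<in> triple_scale (int r) ` P r \<inter> triple_scale (int r') ` P r'"
    then have "int r = int r'" using gcd_image by (metis IntD1 IntD2)
    with that show False by simp
  qed
  have "sum F {t \<in> tildeA n. odd (triple_gcd t) \<and> C t}
      = (\<Sum>r\<in>odd_square_divisors n. sum F (triple_scale (int r) ` P r))"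
    unfolding decomp using finite_odd_square_divisors[OF n] finite_P disjoint
    by (intro sum.UNION_disjoint) auto
  also have "\<dots> = (\<Sum>r\<in>odd_square_divisors n. sum F (P r))"
    using F by (intro sum.cong refl sum_triple_scale_image) (auto simp: odd_square_divisors_def)
  finally show ?thesis by (simp add: P_def)
qed

lemma sum_filter_split:
  assumes "finite A"
  shows "sum F A = sum F {x \<in> A. P x} + sum F {x \<in> A. \<not> P x}"
proof -
  have "sum F A = sum F ({x \<in> A. P x} \<union> {x \<in> A. \<not> P x})"
    by (rule arg_cong[where f = "sum F"]) blast
  also have "\<dots> = sum F {x \<in> A. P x} + sum F {x \<in> A. \<not> P x}"
    using assms by (intro sum.union_disjoint) auto
  finally show ?thesis .
qed

lemma diag_even_of_even_gcd: "even (triple_gcd t) \<Longrightarrow> diag_even t"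
  by (cases t)
    (auto simp: triple_gcd_def diag_even_def intro: dvd_trans[OF _ gcd_dvd1] dvd_trans[OF _ gcd_dvd2])

lemma four_dvd_of_diag_even:
  assumes "t \<in> tildeA n" and "diag_even t"
  shows "4 dvd n"
proof -
  obtain x y z where t: "t = (x, y, z)" by (cases t)
  obtain a b where "x = 2 * a" "z = 2 * b"
    using assms(2) by (auto simp: t diag_even_def elim!: evenE)
  then have "int n = 4 * (a * b)" using assms(1) by (simp add: t tildeA_def)
  then have "int 4 dvd int n" by simp
  then show ?thesis by (simp only: int_dvd_int_iff)
qed

lemma sum_even_gcd_triples:
  assumes "scale_invariant F"
  shows "sum F {t \<in> tildeA n. even (triple_gcd t)}
    = (if 4 dvd n then sum F (tildeA (n div 4)) else 0)"
proof -
  have halve: "{t \<in> tildeA n. even (triple_gcd t)}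
      = triple_scale 2 ` {t. 4 dvd n \<and> t \<in> tildeA (n div 4)}"
    (is "?L = triple_scale 2 ` ?R")
  proof (intro equalityI subsetI)
    fix t assume t: "t \<in> ?L"
    then obtain t' where t': "t = triple_scale 2 t'"
      using triple_scale_of_dvd_gcd[of 2 t] by blast
    then have "t' \<in> ?R" using t triple_scale_in_tildeA_iff[of 2 t' n] by simp
    with t' show "t \<in> triple_scale 2 ` ?R" by blast
  next
    fix t assume "t \<in> triple_scale 2 ` ?R"
    then obtain t' where "t = triple_scale 2 t'" "t' \<in> ?R" by blast
    then show "t \<in> ?L"
      using triple_scale_in_tildeA_iff[of 2 t' n] by (simp add: triple_gcd_scale)
  qed
  show ?thesis using assms by (simp add: halve sum_triple_scale_image)
qed

definition hecke_sum :: "(int \<times> int \<times> int \<Rightarrow> 'a::comm_monoid_add) \<Rightarrow> nat \<Rightarrow> 'a" where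
  "hecke_sum F n =
     sum F {t \<in> tildeA n. triple_gcd t = 1 \<and> \<not> diag_even t} +
     sum F {t \<in> tildeA (2 * n). triple_gcd t = 1 \<and> diag_even t}"

definition tilde_hecke_sum :: "(int \<times> int \<times> int \<Rightarrow> 'a::comm_monoid_add) \<Rightarrow> nat \<Rightarrow> 'a" where
  "tilde_hecke_sum F n = sum F (tildeA n) + sum F {t \<in> tildeA (2 * n). diag_even t}"

definition odd_gcd_sum :: "(int \<times> int \<times> int \<Rightarrow> 'a::comm_monoid_add) \<Rightarrow> nat \<Rightarrow> 'a" where
  "odd_gcd_sum F n =
     sum F {t \<in> tildeA n. odd (triple_gcd t) \<and> \<not> diag_even t} +
     sum F {t \<in> tildeA (2 * n). odd (triple_gcd t) \<and> diag_even t}"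

lemma sum_odd_square_divisors_hecke_sum:
  assumes F: "scale_invariant F" and n: "n > 0"
  shows "(\<Sum>r\<in>odd_square_divisors n. hecke_sum F (n div r ^ 2)) = odd_gcd_sum F n"
proof -
  have double: "2 * (n div r ^ 2) = 2 * n div r ^ 2" if "r \<in> odd_square_divisors n" for r
    using that by (simp add: odd_square_divisors_def div_mult_swap)
  have "(\<Sum>r\<in>odd_square_divisors n. hecke_sum F (n div r ^ 2))
      = (\<Sum>r\<in>odd_square_divisors n.
           sum F {t \<in> tildeA (n div r ^ 2). triple_gcd t = 1 \<and> \<not> diag_even t}) +
        (\<Sum>r\<in>odd_square_divisors (2 * n).
           sum F {t \<in> tildeA (2 * n div r ^ 2). triple_gcd t = 1 \<and> diag_even t})"
    using odd_square_divisors_mult_pow2[of 1 n] double by (simp add: hecke_sum_def sum.distrib)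
  also have "\<dots> = odd_gcd_sum F n"
    using sum_odd_gcd_triples[OF F n, of "\<lambda>t. \<not> diag_even t"]
      sum_odd_gcd_triples[OF F, of "2 * n" diag_even] n
    by (simp add: odd_gcd_sum_def diag_even_scale_odd)
  finally show ?thesis .
qed

lemma tilde_hecke_sum_recurrence:
  assumes F: "scale_invariant F"
  shows "tilde_hecke_sum F n
    = odd_gcd_sum F n + (if even n then tilde_hecke_sum F (n div 2) else 0)"
proof -
  let ?D = "\<lambda>k. sum F {t \<in> tildeA k. diag_even t}"
  have tildeA_split:
    "sum F (tildeA k) = sum F {t \<in> tildeA k. odd (triple_gcd t) \<and> \<not> diag_even t} + ?D k" for k
  proof -
    have "{t \<in> tildeA k. \<not> diag_even t} = {t \<in> tildeA k. odd (triple_gcd t) \<and> \<not> diag_even t}"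
      using diag_even_of_even_gcd by blast
    then show ?thesis
      using sum_filter_split[OF finite_tildeA, of F k diag_even] by (simp add: add.commute)
  qed
  have diag_split: "?D k = sum F {t \<in> tildeA k. odd (triple_gcd t) \<and> diag_even t} +
      (if 4 dvd k then sum F (tildeA (k div 4)) else 0)" for k
  proof -
    have sets: "{t \<in> {t \<in> tildeA k. diag_even t}. odd (triple_gcd t)}
        = {t \<in> tildeA k. odd (triple_gcd t) \<and> diag_even t}"
      "{t \<in> {t \<in> tildeA k. diag_even t}. \<not> odd (triple_gcd t)}
        = {t \<in> tildeA k. even (triple_gcd t)}"
      using diag_even_of_even_gcd by blast+
    have "finite {t \<in> tildeA k. diag_even t}" using finite_tildeA by simp
    from sum_filter_split[OF this, of F "\<lambda>t. odd (triple_gcd t)", unfolded sets]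
    show ?thesis by (simp only: sum_even_gcd_triples[OF F])
  qed
  have "4 dvd 2 * n \<longleftrightarrow> even n" "2 * n div 4 = n div 2" by presburger+
  then have "tilde_hecke_sum F n
      = odd_gcd_sum F n + (?D n + (if even n then sum F (tildeA (n div 2)) else 0))"
    using tildeA_split[of n] diag_split[of "2 * n"]
    by (simp add: tilde_hecke_sum_def odd_gcd_sum_def ac_simps)
  also have "?D n + (if even n then sum F (tildeA (n div 2)) else 0)
      = (if even n then tilde_hecke_sum F (n div 2) else 0)"
  proof (cases "even n")
    case True
    then show ?thesis by (simp add: tilde_hecke_sum_def add.commute)
  next
    case False
    then have "{t \<in> tildeA n. diag_even t} = {}"
      using four_dvd_of_diag_even dvd_trans[of 2 4 n] by fastforce
    then have "?D n = 0" by (simp only: sum.empty)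
    with False show ?thesis by simp
  qed
  finally show ?thesis .
qed

lemma tilde_hecke_sum_pow2:
  assumes F: "scale_invariant F" and "odd \<beta>"
  shows "tilde_hecke_sum F (2 ^ a * \<beta>) = (\<Sum>j\<in>{0..a}. odd_gcd_sum F (2 ^ j * \<beta>))"
proof (induction a)
  case 0
  then show ?case using tilde_hecke_sum_recurrence[OF F, of \<beta>] \<open>odd \<beta>\<close> by simp
next
  case (Suc a)
  then show ?case using tilde_hecke_sum_recurrence[OF F, of "2 ^ Suc a * \<beta>"]
    by (simp add: sum.atLeast0_atMost_Suc add.commute mult.assoc)
qed

theorem tilde_hecke_sum_eq_sum_hecke_sum:
  fixes \<alpha> \<beta> :: nat
  assumes F: "scale_invariant F" and \<beta>: "odd \<beta>"
  defines "m \<equiv> 2 ^ \<alpha> * \<beta>"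
  shows "tilde_hecke_sum F m =
    (\<Sum>r\<in>odd_square_divisors m. \<Sum>i\<in>{0..\<alpha>}. hecke_sum F (m div (r ^ 2 * 2 ^ i)))"
proof -
  have level: "(\<Sum>r\<in>odd_square_divisors m. hecke_sum F (m div (r ^ 2 * 2 ^ i)))
      = odd_gcd_sum F (2 ^ (\<alpha> - i) * \<beta>)" if "i \<le> \<alpha>" for i
  proof -
    have "m = 2 ^ i * (2 ^ (\<alpha> - i) * \<beta>)"
      using that by (simp add: m_def mult.assoc[symmetric] flip: power_add)
    then have "m div (r ^ 2 * 2 ^ i) = 2 ^ (\<alpha> - i) * \<beta> div r ^ 2" for r
      by (simp add: mult.commute[of "r ^ 2"] div_mult2_eq)
    moreover have "odd_square_divisors m = odd_square_divisors (2 ^ (\<alpha> - i) * \<beta>)"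
      by (simp add: m_def odd_square_divisors_mult_pow2)
    moreover have "2 ^ (\<alpha> - i) * \<beta> > 0" using \<beta> by (simp add: odd_pos)
    ultimately show ?thesis by (simp add: sum_odd_square_divisors_hecke_sum[OF F])
  qed
  have "(\<Sum>r\<in>odd_square_divisors m. \<Sum>i\<in>{0..\<alpha>}. hecke_sum F (m div (r ^ 2 * 2 ^ i)))
      = (\<Sum>i\<in>{0..\<alpha>}. odd_gcd_sum F (2 ^ (\<alpha> - i) * \<beta>))"
    by (subst sum.swap) (simp add: level)
  also have "\<dots> = (\<Sum>j\<in>{0..\<alpha>}. odd_gcd_sum F (2 ^ j * \<beta>))"
    using sum.atLeastAtMost_rev[of "\<lambda>j. odd_gcd_sum F (2 ^ j * \<beta>)" 0 \<alpha>] by simp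
  also have "\<dots> = tilde_hecke_sum F m"
    unfolding m_def by (rule tilde_hecke_sum_pow2[OF F \<beta>, symmetric])
  finally show ?thesis ..
qed

definition act_triple :: "complex \<Rightarrow> int \<times> int \<times> int \<Rightarrow> complex" where
  "act_triple \<tau> = (\<lambda>(x, y, z). act x y z \<tau>)"

lemma scale_invariant_act_triple: "scale_invariant (f \<circ> act_triple \<tau>)"
  unfolding scale_invariant_def
proof (intro allI impI)
  fix g :: int and t :: "int \<times> int \<times> int" assume "g > 0"
  obtain x y z where t: "t = (x, y, z)" by (cases t)
  have "(of_int (g * x) * \<tau> + of_int (g * y)) / of_int (g * z)
      = (of_int g * (of_int x * \<tau> + of_int y)) / (of_int g * of_int z)"
    by (simp add: algebra_simps)
  also have "\<dots> = (of_int x * \<tau> + of_int y) / of_int z"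
    using \<open>g > 0\<close> by (intro mult_divide_mult_cancel_left) simp
  finally show "(f \<circ> act_triple \<tau>) (triple_scale g t) = (f \<circ> act_triple \<tau>) t"
    by (simp add: t triple_scale_def act_triple_def act_def)
qed

lemma hecke_T_eq_hecke_sum: "hecke_T n f \<tau> = hecke_sum (f \<circ> act_triple \<tau>) n"
proof -
  let ?G = "\<lambda>(x, y, z, s::bool). f (act x y z \<tau>)"
  have "M1 n \<union> S1 n = {t \<in> tildeA n. triple_gcd t = 1 \<and> \<not> diag_even t}"
    "S2 n = {t \<in> tildeA (2 * n). triple_gcd t = 1 \<and> diag_even t}"
    by (auto simp: M1_def S1_def S2_def tildeA_def triple_gcd_def diag_even_def)
  moreover have "finite (M1 n \<union> S1 n)" "finite (S2 n)"
    unfolding calculation using finite_tildeA by simp_all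
  moreover have "hecke_T n f \<tau> =
      sum ?G ((\<lambda>(x, y, z). (x, y, z, False)) ` (M1 n \<union> S1 n)) +
      sum ?G ((\<lambda>(x, y, z). (x, y, z, True)) ` S2 n)"
    unfolding hecke_T_def Mset_def using calculation(3,4) by (intro sum.union_disjoint) auto
  ultimately show ?thesis
    by (simp add: hecke_sum_def sum.reindex inj_on_def comp_def act_triple_def case_prod_unfold)
qed

lemma hecke_tildeT_eq_tilde_hecke_sum: "hecke_tildeT n f \<tau> = tilde_hecke_sum (f \<circ> act_triple \<tau>) n"
proof -
  have tildeB: "tildeB n = {t \<in> tildeA (2 * n). diag_even t}"
    by (auto simp: tildeB_def tildeA_def diag_even_def)
  show ?thesis
  proof (cases "even n")
    case True
    then show ?thesis
      by (simp add: hecke_tildeT_def tilde_hecke_sum_def tildeB act_triple_def comp_def case_prod_unfold)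
  next
    case False
    then have "{t \<in> tildeA (2 * n). diag_even t} = {}"
      using four_dvd_of_diag_even by fastforce
    with False show ?thesis
      unfolding hecke_tildeT_def tilde_hecke_sum_def
      by (simp add: act_triple_def comp_def case_prod_unfold del: Collect_empty_eq)
  qed
qed

text \<open>The identity holds termwise for every f.\<close>

theorem proposition2p10:
  fixes m \<alpha> \<beta> :: nat and f :: "complex \<Rightarrow> complex"
  assumes "m > 0" and "m = 2 ^ \<alpha> * \<beta>" and "odd \<beta>"
    and "f meromorphic_on upper_half_plane"
    and "gamma0_2_plus_invariant f"
    and "\<tau> \<in> upper_half_plane"
  shows "hecke_tildeT m f \<tau> =
    (\<Sum>r\<in>{r::nat. r > 0 \<and> odd r \<and> r ^ 2 dvd m}.
       \<Sum>i\<in>{0..\<alpha>}. hecke_T (m div (r ^ 2 * 2 ^ i)) f \<tau>)"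
proof -
  have "{r::nat. r > 0 \<and> odd r \<and> r ^ 2 dvd m} = odd_square_divisors m"
    by (simp add: odd_square_divisors_def)
  then show ?thesis
    using tilde_hecke_sum_eq_sum_hecke_sum[OF scale_invariant_act_triple \<open>odd \<beta>\<close>, where \<alpha> = \<alpha>]
    by (simp add: assms(2) hecke_tildeT_eq_tilde_hecke_sum hecke_T_eq_hecke_sum)
qed

end
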